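(* Let $A$ be a wqo with $\mathbf{w}(A)=\alpha+n$ where $\alpha$ is an ordinal and $0\le n<\omega$. Then there exists a wqo $B$ with $\mathbf{w}(B)=\alpha$ such that $B\sqcup\Gamma_n$ is isomorphic to a substructure of $A$.
   Context: A wqo is a quasi-order in which every infinite sequence $x_0,x_1,\dots$ has $i<j$ with $x_i\le x_j$. $\mathbf{w}(A)$ (width) is the rank of the root of the well-founded tree of finite sequences of pairwise incomparable elements of $A$ (root: empty sequence, children: one-element extensions; rank $r(s)=\sup\{r(t)+1: t \text{ child of } s\}$). $\Gamma_n$ is an $n$-element antichain. $B\sqcup C$ is the disjoint union with ordering $\le_B\cup\le_C$. A substructure of $A$ is a subset of $A$ with the restricted ordering. *)

theory Defs
  imports Main
begin

definition qo_on :: "'a set \<Rightarrow> ('a \<Rightarrow> 'a \<Rightarrow> bool) \<Rightarrow> bool" where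
  "qo_on A le \<longleftrightarrow> (\<forall>x\<in>A. le x x) \<and>
     (\<forall>x\<in>A. \<forall>y\<in>A. \<forall>z\<in>A. le x y \<longrightarrow> le y z \<longrightarrow> le x z)"

definition wqo_on :: "'a set \<Rightarrow> ('a \<Rightarrow> 'a \<Rightarrow> bool) \<Rightarrow> bool" where
  "wqo_on A le \<longleftrightarrow> qo_on A le \<and>
     (\<forall>g :: nat \<Rightarrow> 'a. (\<forall>i. g i \<in> A) \<longrightarrow> (\<exists>i j. i < j \<and> le (g i) (g j)))"

text \<open>Ordinals are represented, as in Main (BNF_Wellorder_Relation), by well-order
  relations up to isomorphism; the ordinal of W is its order type.

  Rank of a node s in a tree given by a child relation ch (ch t s: t is a child of s):
  rank(s) \<le> otype W iff the strict descendants of s admit a labelling into Field W that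
  strictly decreases from each node to its children.\<close>

definition rank_le :: "('n \<Rightarrow> 'n \<Rightarrow> bool) \<Rightarrow> 'n \<Rightarrow> 'b rel \<Rightarrow> bool" where
  "rank_le ch s W \<longleftrightarrow> (\<exists>f. (\<forall>t. ch\<^sup>+\<^sup>+ t s \<longrightarrow> f t \<in> Field W) \<and>
      (\<forall>t u. ch\<^sup>+\<^sup>+ u s \<longrightarrow> ch t u \<longrightarrow> (f t, f u) \<in> W \<and> f t \<noteq> f u))"

text \<open>rank(s) = otype W: rank(s) \<le> otype W but not \<le> any smaller ordinal (proper initial segment).\<close>

definition rank_is :: "('n \<Rightarrow> 'n \<Rightarrow> bool) \<Rightarrow> 'n \<Rightarrow> 'b rel \<Rightarrow> bool" where
  "rank_is ch s W \<longleftrightarrow> Well_order W \<and> rank_le ch s W \<and>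
     (\<forall>a\<in>Field W. \<not> rank_le ch s (Restr W (underS W a)))"

definition antichain_seq :: "'a set \<Rightarrow> ('a \<Rightarrow> 'a \<Rightarrow> bool) \<Rightarrow> 'a list \<Rightarrow> bool" where
  "antichain_seq A le xs \<longleftrightarrow> set xs \<subseteq> A \<and>
     (\<forall>i<length xs. \<forall>j<length xs. i \<noteq> j \<longrightarrow> \<not> le (xs ! i) (xs ! j))"

definition antichain_child :: "'a set \<Rightarrow> ('a \<Rightarrow> 'a \<Rightarrow> bool) \<Rightarrow> 'a list \<Rightarrow> 'a list \<Rightarrow> bool" where
  "antichain_child A le t s \<longleftrightarrow> antichain_seq A le s \<and> antichain_seq A le t \<and>
     (\<exists>x. t = s @ [x])"

definition width_is :: "'a set \<Rightarrow> ('a \<Rightarrow> 'a \<Rightarrow> bool) \<Rightarrow> 'b rel \<Rightarrow> bool" where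
  "width_is A le W \<longleftrightarrow> rank_is (antichain_child A le) [] W"

definition ord_plus_nat :: "'b rel \<Rightarrow> nat \<Rightarrow> ('b + nat) rel" where
  "ord_plus_nat W n =
     {(Inl a, Inl b) | a b. (a, b) \<in> W} \<union>
     {(Inl a, Inr i) | a i. a \<in> Field W \<and> i < n} \<union>
     {(Inr i, Inr j) | i j. i \<le> j \<and> j < n}"

definition dunion_carrier :: "'a set \<Rightarrow> nat \<Rightarrow> ('a + nat) set" where
  "dunion_carrier B n = Inl ` B \<union> Inr ` {..<n}"

fun dunion_le :: "('a \<Rightarrow> 'a \<Rightarrow> bool) \<Rightarrow> ('a + nat) \<Rightarrow> ('a + nat) \<Rightarrow> bool" where
  "dunion_le le (Inl x) (Inl y) = le x y"
| "dunion_le le (Inr i) (Inr j) = (i = j)"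
| "dunion_le le _ _ = False"

end

theory Submission
  imports Defs
begin

text \<open>If a node of the antichain tree has rank W + (m + 1), then some child has rank W + m:
  every child has rank at most W + m, and if all of them had smaller rank, their rank labellings
  could be glued into one showing that the node itself has rank at most W + m. Descending n times
  from the root therefore yields an antichain s = [s_0, ..., s_(n-1)] of rank W.
  The subtree below s is the antichain tree of the set B of elements incomparable with every
  s_i, so w(B) = W, and B together with the s_i is a copy of B \<squnion> \<Gamma>_n inside A.\<close>

lemma antichain_seq_append:
  "antichain_seq A le (xs @ ys) \<longleftrightarrow> antichain_seq A le xs \<and> antichain_seq A le ys \<and>
     (\<forall>x\<in>set xs. \<forall>y\<in>set ys. \<not> le x y \<and> \<not> le y x)"
  (is "?lhs \<longleftrightarrow> ?rhs")
proof
  let ?m = "length xs"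
  assume ?lhs
  then have set: "set xs \<subseteq> A" "set ys \<subseteq> A"
    and nle: "\<And>i j. i < length (xs @ ys) \<Longrightarrow> j < length (xs @ ys) \<Longrightarrow> i \<noteq> j \<Longrightarrow>
                 \<not> le ((xs @ ys) ! i) ((xs @ ys) ! j)"
    unfolding antichain_seq_def by auto
  have "\<not> le (xs ! i) (xs ! j)" if "i < ?m" "j < ?m" "i \<noteq> j" for i j
    using nle[of i j] that by (simp add: nth_append)
  moreover have "\<not> le (ys ! i) (ys ! j)" if "i < length ys" "j < length ys" "i \<noteq> j" for i j
    using nle[of "?m + i" "?m + j"] that by (simp add: nth_append)
  moreover have "\<not> le (xs ! i) (ys ! j) \<and> \<not> le (ys ! j) (xs ! i)"
    if "i < ?m" "j < length ys" for i j
    using nle[of i "?m + j"] nle[of "?m + j" i] that by (simp add: nth_append)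
  ultimately show ?rhs
    using set unfolding antichain_seq_def by (auto simp: in_set_conv_nth)
next
  assume ?rhs
  then show ?lhs
    unfolding antichain_seq_def
    by (auto simp: nth_append)
qed

definition incomparable_with :: "('a \<Rightarrow> 'a \<Rightarrow> bool) \<Rightarrow> 'a list \<Rightarrow> 'a set \<Rightarrow> 'a set" where
  "incomparable_with le s A = {y \<in> A. \<forall>x\<in>set s. \<not> le x y \<and> \<not> le y x}"

lemma incomparable_with_subset: "incomparable_with le s A \<subseteq> A"
  unfolding incomparable_with_def by blast

lemma antichain_seq_append_iff_incomparable_with:
  assumes "antichain_seq A le s"
  shows "antichain_seq A le (s @ r) \<longleftrightarrow> antichain_seq (incomparable_with le s A) le r"
  using assms unfolding antichain_seq_append
  by (auto simp: antichain_seq_def incomparable_with_def)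

lemma wqo_on_subset:
  assumes "wqo_on A le" and "B \<subseteq> A"
  shows "wqo_on B le"
  using assms unfolding wqo_on_def qo_on_def by (meson subsetD)

definition rank_labelling :: "('n \<Rightarrow> 'n \<Rightarrow> bool) \<Rightarrow> 'n \<Rightarrow> 'b rel \<Rightarrow> ('n \<Rightarrow> 'b) \<Rightarrow> bool" where
  "rank_labelling ch s W f \<longleftrightarrow> (\<forall>t. ch\<^sup>+\<^sup>+ t s \<longrightarrow> f t \<in> Field W) \<and>
      (\<forall>t u. ch\<^sup>+\<^sup>+ u s \<longrightarrow> ch t u \<longrightarrow> (f t, f u) \<in> W \<and> f t \<noteq> f u)"

lemma rank_le_iff_labelling: "rank_le ch s W \<longleftrightarrow> (\<exists>f. rank_labelling ch s W f)"
  unfolding rank_le_def rank_labelling_def ..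

lemma rank_le_map:
  assumes "rank_le ch s V" and "inj_on h (Field V)" and "\<And>x y. (x, y) \<in> V \<Longrightarrow> (h x, h y) \<in> V'"
  shows "rank_le ch s V'"
proof -
  obtain f where f: "rank_labelling ch s V f"
    using assms(1) unfolding rank_le_iff_labelling by blast
  have "h x \<in> Field V'" if "x \<in> Field V" for x
    using that assms(3) unfolding Field_def by blast
  moreover have "h x \<noteq> h y" if "x \<in> Field V" "y \<in> Field V" "x \<noteq> y" for x y
    using that assms(2) by (meson inj_onD)
  ultimately have "rank_labelling ch s V' (h \<circ> f)"
    using f assms(3) unfolding rank_labelling_def by (simp add: tranclp_into_tranclp2)
  then show ?thesis
    unfolding rank_le_iff_labelling by blast
qed

lemma rank_le_mono: "rank_le ch s V \<Longrightarrow> V \<subseteq> V' \<Longrightarrow> rank_le ch s V'"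
  using rank_le_map[of ch s V id V'] by auto

lemma rank_le_pullback:
  assumes "rank_le ch s V" and "\<phi> s' = s"
    and hom: "\<And>t u. ch'\<^sup>*\<^sup>* u s' \<Longrightarrow> ch' t u \<Longrightarrow> ch (\<phi> t) (\<phi> u)"
  shows "rank_le ch' s' V"
proof -
  obtain f where f: "rank_labelling ch s V f"
    using assms(1) unfolding rank_le_iff_labelling by blast
  have desc: "ch\<^sup>+\<^sup>+ (\<phi> t) s" if "ch'\<^sup>+\<^sup>+ t s'" for t
    using that
  proof (induction t rule: converse_tranclp_induct)
    case (base t)
    then show ?case using hom assms(2) by fastforce
  next
    case (step t u)
    then show ?case using hom by (meson tranclp_into_rtranclp tranclp_into_tranclp2)
  qed
  have "rank_labelling ch' s' V (f \<circ> \<phi>)"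
    using f desc hom unfolding rank_labelling_def by (simp add: tranclp_into_rtranclp)
  then show ?thesis
    unfolding rank_le_iff_labelling by blast
qed

lemma rank_labelling_descendant_below:
  assumes "rank_labelling ch s V f" and "trans V" and "antisym V"
    and "ch\<^sup>+\<^sup>+ c s" and "ch\<^sup>+\<^sup>+ t c"
  shows "(f t, f c) \<in> V - Id"
  using assms(5)
proof (induction t rule: converse_tranclp_induct)
  case (base t)
  then show ?case using assms(1,4) unfolding rank_labelling_def by auto
next
  case (step t u)
  have "ch\<^sup>+\<^sup>+ u s"
    using step(2) assms(4) by (rule tranclp_trans)
  then have "(f t, f u) \<in> V - Id"
    using assms(1) step(1) unfolding rank_labelling_def by blast
  then show ?case
    using step.IH trans_diff_Id[OF assms(2,3)] by (meson transD)
qed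

lemma rank_labelling_descendant:
  assumes "rank_labelling ch s V f" and "Well_order V" and "ch\<^sup>+\<^sup>+ c s"
  shows "f c \<in> Field V" and "rank_labelling ch c (Restr V (underS V (f c))) f"
proof -
  have "refl_on (Field V) V" "trans V" "antisym V"
    using assms(2) by (simp_all add: order_on_defs)
  have desc: "ch\<^sup>+\<^sup>+ t s" if "ch\<^sup>+\<^sup>+ t c" for t
    using that assms(3) by (rule tranclp_trans)
  have under: "f t \<in> underS V (f c)" if "ch\<^sup>+\<^sup>+ t c" for t
    using rank_labelling_descendant_below[OF assms(1) \<open>trans V\<close> \<open>antisym V\<close> assms(3) that]
    unfolding underS_def by auto
  have "f t \<in> Field (Restr V (underS V (f c)))" if "ch\<^sup>+\<^sup>+ t c" for t
  proof -
    have "f t \<in> Field V"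
      using assms(1) desc[OF that] unfolding rank_labelling_def by blast
    then have "(f t, f t) \<in> Restr V (underS V (f c))"
      using \<open>refl_on (Field V) V\<close> under[OF that] by (simp add: refl_on_def)
    then show ?thesis by (rule FieldI1)
  qed
  moreover have "(f t, f u) \<in> Restr V (underS V (f c)) \<and> f t \<noteq> f u"
    if "ch\<^sup>+\<^sup>+ u c" and "ch t u" for t u
    using assms(1) desc[OF that(1)] that under tranclp_into_tranclp2[OF that(2,1)]
    unfolding rank_labelling_def by blast
  ultimately show "rank_labelling ch c (Restr V (underS V (f c))) f"
    unfolding rank_labelling_def by blast
  show "f c \<in> Field V"
    using assms(1,3) unfolding rank_labelling_def by blast
qed

lemma rank_labelling_Restr_underS:
  assumes "rank_labelling ch c (Restr V (underS V a)) h" and "ch\<^sup>+\<^sup>+ t c"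
  shows "h t \<in> underS V a"
proof -
  have "h t \<in> Field (Restr V (underS V a))"
    using assms unfolding rank_labelling_def by blast
  then show ?thesis using Field_Restr_subset by fast
qed

lemma ord_plus_nat_Suc_top:
  shows "Inr m \<in> Field (ord_plus_nat W (Suc m))"
    and "x \<in> Field (ord_plus_nat W (Suc m)) \<Longrightarrow> (x, Inr m) \<in> ord_plus_nat W (Suc m)"
  unfolding ord_plus_nat_def Field_def by auto

lemma ord_plus_nat_Suc_below_top:
  "Restr (ord_plus_nat W (Suc m)) (underS (ord_plus_nat W (Suc m)) (Inr m)) = ord_plus_nat W m"
  unfolding ord_plus_nat_def underS_def Field_def by auto

lemma rank_is_ord_plus_nat_0:
  assumes "rank_is ch s (ord_plus_nat W 0)" and "Well_order W"
  shows "rank_is ch s W"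
proof -
  let ?V = "ord_plus_nat W 0"
  have "inj_on projl (Field ?V)"
    unfolding ord_plus_nat_def Field_def by (auto simp: inj_on_def)
  moreover have "(projl x, projl y) \<in> W" if "(x, y) \<in> ?V" for x y
    using that unfolding ord_plus_nat_def by auto
  ultimately have "rank_le ch s W"
    using assms(1) rank_le_map[of ch s ?V projl W] unfolding rank_is_def by blast
  moreover have "\<not> rank_le ch s (Restr W (underS W a))" if a: "a \<in> Field W" for a
  proof
    assume "rank_le ch s (Restr W (underS W a))"
    then have "rank_le ch s (Restr ?V (underS ?V (Inl a)))"
      by (rule rank_le_map[where h = Inl]) (auto simp: ord_plus_nat_def underS_def)
    moreover have "Inl a \<in> Field ?V"
    proof -
      have "(a, a) \<in> W"
        using a assms(2) by (simp add: order_on_defs refl_on_def)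
      then show ?thesis
        unfolding ord_plus_nat_def by (auto intro: FieldI1)
    qed
    ultimately show False
      using assms(1) unfolding rank_is_def by blast
  qed
  ultimately show ?thesis
    using assms(2) unfolding rank_is_def by blast
qed

text \<open>take (Suc (length s)) t is the child of s through which a strict descendant t of s
  descends from s.\<close>

definition glued_labelling ::
    "'a list \<Rightarrow> ('a list \<Rightarrow> 'b) \<Rightarrow> ('a list \<Rightarrow> 'a list \<Rightarrow> 'b) \<Rightarrow> 'a list \<Rightarrow> 'b" where
  "glued_labelling s a h t = (let c = take (Suc (length s)) t in if t = c then a c else h c t)"

locale snoc_tree =
  fixes ch :: "'a list \<Rightarrow> 'a list \<Rightarrow> bool"
  assumes child_snoc: "ch t u \<Longrightarrow> \<exists>x. t = u @ [x]"
begin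

lemma rtranclp_child_append: "ch\<^sup>*\<^sup>* t s \<Longrightarrow> \<exists>r. t = s @ r"
  by (induction t rule: converse_rtranclp_induct) (auto dest: child_snoc)

lemma tranclp_child_append: "ch\<^sup>+\<^sup>+ t s \<Longrightarrow> \<exists>x r. t = s @ x # r"
  by (induction t rule: converse_tranclp_induct) (auto dest!: child_snoc)

lemma child_take_branch:
  assumes "ch\<^sup>+\<^sup>+ u s" and "ch t u"
  shows "take (Suc (length s)) t = take (Suc (length s)) u" and "t \<noteq> take (Suc (length s)) t"
proof -
  obtain x where "t = u @ [x]" using assms(2) child_snoc by blast
  moreover obtain y r where "u = s @ y # r" using assms(1) tranclp_child_append by blast
  ultimately show "take (Suc (length s)) t = take (Suc (length s)) u"
    and "t \<noteq> take (Suc (length s)) t" by auto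
qed

lemma tranclp_child_branch:
  assumes "ch\<^sup>+\<^sup>+ t s"
  shows "ch (take (Suc (length s)) t) s \<and> ch\<^sup>*\<^sup>* t (take (Suc (length s)) t)"
  using assms
proof (induction t rule: converse_tranclp_induct)
  case (base t)
  then obtain x where "t = s @ [x]" using child_snoc by blast
  then show ?case using base by simp
next
  case (step t u)
  have "take (Suc (length s)) t = take (Suc (length s)) u"
    by (rule child_take_branch(1)[OF step(2,1)])
  then show ?case
    using step.IH step(1) by (simp add: converse_rtranclp_into_rtranclp)
qed

lemma rank_labelling_glued:
  assumes children: "\<And>c. ch c s \<Longrightarrow>
      a c \<in> Field V \<and> rank_labelling ch c (Restr V (underS V (a c))) (h c)"
  shows "rank_labelling ch s V (glued_labelling s a h)"
proof -
  let ?c = "take (Suc (length s))" and ?g = "glued_labelling s a h"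
  have branch: "ch (?c t) s" "ch\<^sup>*\<^sup>* t (?c t)" if "ch\<^sup>+\<^sup>+ t s" for t
    using tranclp_child_branch[OF that] by auto
  have g_child: "?g t = a t" if "t = ?c t" for t
    using that unfolding glued_labelling_def Let_def by simp
  have g_branch: "?g t = h (?c t) t" and strict_branch: "ch\<^sup>+\<^sup>+ t (?c t)"
    if "ch\<^sup>+\<^sup>+ t s" and "t \<noteq> ?c t" for t
    using that branch(2)[OF that(1)] unfolding glued_labelling_def Let_def
    by (auto dest: rtranclpD)
  have below: "h c t \<in> underS V (a c)" if "ch c s" and "ch\<^sup>+\<^sup>+ t c" for c t
    using children[OF that(1)] that(2) by (blast intro: rank_labelling_Restr_underS)
  have "?g t \<in> Field V" if t: "ch\<^sup>+\<^sup>+ t s" for t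
  proof (cases "t = ?c t")
    case True
    then show ?thesis using children branch(1)[OF t] g_child[OF True] by metis
  next
    case False
    then show ?thesis
      using below[OF branch(1)[OF t] strict_branch[OF t False]] g_branch[OF t False]
      by (metis underS_Field)
  qed
  moreover have "(?g t, ?g u) \<in> V \<and> ?g t \<noteq> ?g u" if u: "ch\<^sup>+\<^sup>+ u s" and tu: "ch t u" for t u
  proof -
    define c where "c = ?c u"
    have "?c t = c" and "t \<noteq> c"
      using child_take_branch[OF u tu] unfolding c_def by auto
    moreover have t: "ch\<^sup>+\<^sup>+ t s" using u tu by (meson tranclp_into_tranclp2)
    ultimately have gt: "?g t = h c t" and tc: "ch\<^sup>+\<^sup>+ t c"
      using g_branch strict_branch by auto
    show ?thesis
    proof (cases "u = c")
      case True
      then have "?g u = a c" using g_child unfolding c_def by simp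
      moreover have "h c t \<in> underS V (a c)"
        using below branch(1)[OF u] tc unfolding c_def by blast
      ultimately show ?thesis using gt unfolding underS_def by auto
    next
      case False
      then have "?g u = h c u" and "ch\<^sup>+\<^sup>+ u c"
        using g_branch[OF u] strict_branch[OF u] unfolding c_def by auto
      moreover have "rank_labelling ch c (Restr V (underS V (a c))) (h c)"
        using children branch(1)[OF u] unfolding c_def by blast
      ultimately show ?thesis using tu gt unfolding rank_labelling_def by auto
    qed
  qed
  ultimately show ?thesis
    unfolding rank_labelling_def by blast
qed

lemma rank_le_of_children:
  assumes "\<And>c. ch c s \<Longrightarrow> \<exists>a\<in>Field V. rank_le ch c (Restr V (underS V a))"
  shows "rank_le ch s V"
proof -
  obtain a h where "\<And>c. ch c s \<Longrightarrow>
      a c \<in> Field V \<and> rank_labelling ch c (Restr V (underS V (a c))) (h c)"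
    using assms unfolding rank_le_iff_labelling by metis
  then show ?thesis
    unfolding rank_le_iff_labelling by (blast intro: rank_labelling_glued)
qed

lemma rank_is_child_below_top:
  assumes "rank_is ch s V" and "a \<in> Field V" and top: "\<And>x. x \<in> Field V \<Longrightarrow> (x, a) \<in> V"
  shows "\<exists>c. ch c s \<and> rank_is ch c (Restr V (underS V a))"
proof (rule ccontr)
  let ?V' = "Restr V (underS V a)"
  assume none: "\<nexists>c. ch c s \<and> rank_is ch c ?V'"
  have WO: "Well_order V" using assms(1) unfolding rank_is_def by blast
  then have "trans V" "antisym V" by (simp_all add: order_on_defs)
  obtain f where f: "rank_labelling ch s V f"
    using assms(1) unfolding rank_is_def rank_le_iff_labelling by blast
  have "\<exists>b\<in>Field ?V'. rank_le ch c (Restr ?V' (underS ?V' b))" if c: "ch c s" for c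
  proof -
    note c_desc = rank_labelling_descendant[OF f WO tranclp.r_into_trancl[of ch, OF c]]
    have "underS V (f c) \<subseteq> underS V a"
      using underS_incr[OF \<open>trans V\<close> \<open>antisym V\<close> top[OF c_desc(1)]] .
    then have "Restr V (underS V (f c)) \<subseteq> ?V'" by blast
    moreover have "rank_le ch c (Restr V (underS V (f c)))"
      using c_desc(2) unfolding rank_le_iff_labelling by blast
    ultimately have "rank_le ch c ?V'"
      by (rule rank_le_mono[rotated])
    moreover have "\<not> rank_is ch c ?V'"
      using none c by blast
    ultimately show ?thesis
      using Well_order_Restr[OF WO] unfolding rank_is_def by simp
  qed
  then have "rank_le ch s ?V'"
    by (rule rank_le_of_children)
  then show False
    using assms(1,2) unfolding rank_is_def by blast
qed

lemma rank_is_ord_plus_nat_descent: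
  "rank_is ch s (ord_plus_nat W k) \<Longrightarrow>
    \<exists>r. length r = k \<and> ch\<^sup>*\<^sup>* (s @ r) s \<and> rank_is ch (s @ r) (ord_plus_nat W 0)"
proof (induction k arbitrary: s)
  case 0
  then show ?case by (intro exI[of _ "[]"]) simp
next
  case (Suc k)
  obtain c where "ch c s" and "rank_is ch c (ord_plus_nat W k)"
    using rank_is_child_below_top[OF Suc.prems ord_plus_nat_Suc_top]
    unfolding ord_plus_nat_Suc_below_top by blast
  moreover obtain x where "c = s @ [x]"
    using \<open>ch c s\<close> child_snoc by blast
  ultimately obtain r where "length r = k" "ch\<^sup>*\<^sup>* (s @ x # r) (s @ [x])"
      "rank_is ch (s @ x # r) (ord_plus_nat W 0)"
    using Suc.IH by fastforce
  then show ?case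
    using \<open>ch c s\<close> \<open>c = s @ [x]\<close> by (intro exI[of _ "x # r"]) auto
qed

end

interpretation antichain_tree: snoc_tree "antichain_child A le" for A le
  by unfold_locales (auto simp: antichain_child_def)

lemma antichain_child_rtranclp_antichain_seq:
  "(antichain_child A le)\<^sup>*\<^sup>* t s \<Longrightarrow> antichain_seq A le s \<Longrightarrow> antichain_seq A le t"
  by (induction t rule: converse_rtranclp_induct) (auto simp: antichain_child_def)

lemma rank_le_antichain_child_iff_incomparable_with:
  assumes "antichain_seq A le s"
  shows "rank_le (antichain_child A le) s V \<longleftrightarrow>
    rank_le (antichain_child (incomparable_with le s A) le) [] V"
  (is "rank_le ?chA s V \<longleftrightarrow> rank_le ?chB [] V")
proof
  assume "rank_le ?chA s V"
  then show "rank_le ?chB [] V"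
    by (rule rank_le_pullback[where \<phi> = "\<lambda>r. s @ r"])
      (auto simp: antichain_child_def antichain_seq_append_iff_incomparable_with[OF assms])
next
  assume rank_B: "rank_le ?chB [] V"
  have hom: "?chB (drop (length s) t) (drop (length s) u)"
    if u: "?chA\<^sup>*\<^sup>* u s" and tu: "?chA t u" for t u
  proof -
    obtain r where u_eq: "u = s @ r" using antichain_tree.rtranclp_child_append[OF u] by blast
    moreover obtain x where "t = u @ [x]" using tu unfolding antichain_child_def by blast
    ultimately have "t = s @ (r @ [x])" by simp
    then show ?thesis
      using tu u_eq
      unfolding antichain_child_def antichain_seq_append_iff_incomparable_with[OF assms, symmetric]
      by simp
  qed
  show "rank_le ?chA s V"
    by (rule rank_le_pullback[where \<phi> = "drop (length s)", OF rank_B]) (simp_all add: hom)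
qed

lemma rank_is_antichain_child_iff_width_is:
  assumes "antichain_seq A le s"
  shows "rank_is (antichain_child A le) s V \<longleftrightarrow> width_is (incomparable_with le s A) le V"
  unfolding width_is_def rank_is_def rank_le_antichain_child_iff_incomparable_with[OF assms] ..

lemma dunion_embedding_incomparable_with:
  assumes refl: "\<forall>x\<in>A. le x x" and s: "antichain_seq A le s"
  defines "B \<equiv> incomparable_with le s A" and "f \<equiv> case_sum id (\<lambda>i. s ! i)"
  shows "\<forall>x\<in>dunion_carrier B (length s). \<forall>y\<in>dunion_carrier B (length s).
           dunion_le le x y \<longleftrightarrow> le (f x) (f y)"
    and "inj_on f (dunion_carrier B (length s))"
    and "f ` dunion_carrier B (length s) \<subseteq> A"
proof -
  have sA: "s ! i \<in> A" if "i < length s" for i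
    using s that unfolding antichain_seq_def by auto
  have s_le: "le (s ! i) (s ! j) \<longleftrightarrow> i = j" if "i < length s" "j < length s" for i j
    using s that refl sA unfolding antichain_seq_def by blast
  have B: "\<not> le (s ! i) b" "\<not> le b (s ! i)" if "b \<in> B" "i < length s" for b i
    using that unfolding B_def incomparable_with_def by auto
  show order: "\<forall>x\<in>dunion_carrier B (length s). \<forall>y\<in>dunion_carrier B (length s).
           dunion_le le x y \<longleftrightarrow> le (f x) (f y)"
    unfolding dunion_carrier_def f_def using s_le B by auto
  have "s ! i \<notin> B" if "i < length s" for i
    using B(1) s_le that by blast
  moreover have "distinct s"
    unfolding distinct_conv_nth using s_le by metis
  ultimately show "inj_on f (dunion_carrier B (length s))"
    unfolding dunion_carrier_def f_def inj_on_def by (auto simp: nth_eq_iff_index_eq)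
  show "f ` dunion_carrier B (length s) \<subseteq> A"
    unfolding dunion_carrier_def f_def using sA incomparable_with_subset[of le s A, folded B_def] by auto
qed

theorem mainTheorem6:
  fixes A :: "'a set" and le :: "'a \<Rightarrow> 'a \<Rightarrow> bool"
    and W :: "'b rel" and n :: nat
  assumes "wqo_on A le"
    and "Well_order W"
    and "width_is A le (ord_plus_nat W n)"
  shows "\<exists>(B :: 'a set) leB (f :: 'a + nat \<Rightarrow> 'a).
           wqo_on B leB \<and> width_is B leB W \<and>
           inj_on f (dunion_carrier B n) \<and> f ` dunion_carrier B n \<subseteq> A \<and>
           (\<forall>x\<in>dunion_carrier B n. \<forall>y\<in>dunion_carrier B n.
              dunion_le leB x y \<longleftrightarrow> le (f x) (f y))"
proof -
  have refl: "\<forall>x\<in>A. le x x"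
    using assms(1) unfolding wqo_on_def qo_on_def by blast
  have "rank_is (antichain_child A le) [] (ord_plus_nat W n)"
    using assms(3) unfolding width_is_def .
  from antichain_tree.rank_is_ord_plus_nat_descent[OF this]
  obtain s where "length s = n" and s_desc: "(antichain_child A le)\<^sup>*\<^sup>* s []"
    and s_rank: "rank_is (antichain_child A le) s (ord_plus_nat W 0)"
    by auto
  have s: "antichain_seq A le s"
    using s_desc by (rule antichain_child_rtranclp_antichain_seq) (simp add: antichain_seq_def)
  define B where "B = incomparable_with le s A"
  have "width_is B le W"
    using rank_is_ord_plus_nat_0[OF s_rank assms(2)]
    unfolding B_def rank_is_antichain_child_iff_width_is[OF s] .
  moreover have "wqo_on B le"
    using assms(1) incomparable_with_subset unfolding B_def by (rule wqo_on_subset)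
  moreover note dunion_embedding_incomparable_with[OF refl s, folded B_def, unfolded \<open>length s = n\<close>]
  ultimately show ?thesis
    by (intro exI[of _ B] exI[of _ le] exI[of _ "case_sum id (\<lambda>i. s ! i)"] conjI) simp_all
qed

end
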